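(* Let $\mathcal{J}=\langle U,g,f\rangle$ be an optimal control problem satisfying the standing assumptions below, and let $V:\mathbb{R}^d\to\mathbb{R}$. Then $\mathcal{J}$ admits $V$ as its general limit value if and only if there is general uniform convergence of the value functions $\{V_\theta\}$ to $V$, i.e. for every $\varepsilon>0$ there exist $S>0$ and $\eta>0$ such that every $\theta\in\Delta(\mathbb{R}_+)$ with $\overline{TV}_S(\theta)\leq\eta$ satisfies $\|V_\theta-V\|_\infty\leq\varepsilon$.
   Context: Setting: $U$ is a metric space, $g:\mathbb{R}^d\times U\to\mathbb{R}$ is Borel measurable and bounded, $f:\mathbb{R}^d\times U\to\mathbb{R}^d$ is Borel measurable with $\|f(y,u)-f(\bar y,u)\|\leq L\|y-\bar y\|$ and $\|f(y,u)\|\leq a(1+\|y\|)$ for constants $L\ge0,a>0$. $\mathcal{U}$ is the set of measurable controls $u:[0,+\infty)\to U$; $y(t,u,y_0)$ is the solution of $y'=f(y,u)$, $y(0)=y_0$. For a Borel probability measure $\theta\in\Delta(\mathbb{R}_+)$ (an evaluation), $V_\theta(y_0)=\inf_{u\in\mathcal{U}}\int_{[0,+\infty)} g(y(s,u,y_0),u(s))\,d\theta(s)$. $TV_s(\theta)=\sup_{Q\in\mathcal{B}(\mathbb{R}_+)}|\theta(Q)-\theta(Q+s)|$, $\overline{TV}_S(\theta)=\sup_{0\le s\le S}TV_s(\theta)$. A sequence $(\theta^k)$ satisfies the long-term condition (LTC) if $\overline{TV}_S(\theta^k)\to0$ for every $S>0$. $\mathcal{J}$ admits $V$ as general limit value if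 for every sequence $(\theta^k)$ satisfying the LTC, $V_{\theta^k}\to V$ uniformly on $\mathbb{R}^d$. *)

theory Defs
  imports "HOL-Analysis.Analysis" "HOL-Probability.Probability"
begin

text \<open>Evaluations: Borel probability measures on R_+ = [0,+inf), represented as
  probability measures on the Borel sets of the real line carried by [0,+inf).\<close>
definition evaluation :: "real measure \<Rightarrow> bool" where
  "evaluation \<theta> \<longleftrightarrow> prob_space \<theta> \<and> sets \<theta> = sets borel \<and> emeasure \<theta> {..<0} = 0"

definition TV :: "real measure \<Rightarrow> real \<Rightarrow> real" where
  "TV \<theta> s = Sup {\<bar>measure \<theta> Q - measure \<theta> ((\<lambda>x. x + s) ` Q)\<bar> | Q. Q \<in> sets borel \<and> Q \<subseteq> {0..}}"

definition TVbar :: "real measure \<Rightarrow> real \<Rightarrow> real" where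
  "TVbar \<theta> S = Sup {TV \<theta> s | s. 0 \<le> s \<and> s \<le> S}"

definition LTC :: "(nat \<Rightarrow> real measure) \<Rightarrow> bool" where
  "LTC \<Theta> \<longleftrightarrow> (\<forall>S>0. (\<lambda>k. TVbar (\<Theta> k) S) \<longlonglongrightarrow> 0)"

text \<open>Measurable controls u : [0,+inf) -> U (Borel measurable; values at negative times are irrelevant).\<close>
definition control :: "(real \<Rightarrow> 'u::metric_space) \<Rightarrow> bool" where
  "control u \<longleftrightarrow> u \<in> measurable (restrict_space borel {0..}) borel"

definition trajectory ::
  "('a::euclidean_space \<Rightarrow> 'u \<Rightarrow> 'a) \<Rightarrow> (real \<Rightarrow> 'u) \<Rightarrow> 'a \<Rightarrow> (real \<Rightarrow> 'a) \<Rightarrow> bool" where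
  "trajectory f u y0 y \<longleftrightarrow> continuous_on {0..} y \<and>
     (\<forall>t\<ge>0. (\<lambda>s. f (y s) (u s)) integrable_on {0..t} \<and>
            y t = y0 + integral {0..t} (\<lambda>s. f (y s) (u s)))"

definition val :: "('a::euclidean_space \<Rightarrow> 'u::metric_space \<Rightarrow> 'a) \<Rightarrow> ('a \<Rightarrow> 'u \<Rightarrow> real)
    \<Rightarrow> real measure \<Rightarrow> 'a \<Rightarrow> real" where
  "val f g \<theta> y0 = Inf {integral\<^sup>L (restrict_space \<theta> {0..}) (\<lambda>s. g (y s) (u s)) | u y.
       control u \<and> trajectory f u y0 y}"

definition general_limit_value ::
  "('a::euclidean_space \<Rightarrow> 'u::metric_space \<Rightarrow> 'a) \<Rightarrow> ('a \<Rightarrow> 'u \<Rightarrow> real) \<Rightarrow> ('a \<Rightarrow> real) \<Rightarrow> bool" where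
  "general_limit_value f g V \<longleftrightarrow>
     (\<forall>\<Theta>. (\<forall>k. evaluation (\<Theta> k)) \<and> LTC \<Theta> \<longrightarrow>
        uniform_limit UNIV (\<lambda>k. val f g (\<Theta> k)) V sequentially)"

definition general_uniform_convergence ::
  "('a::euclidean_space \<Rightarrow> 'u::metric_space \<Rightarrow> 'a) \<Rightarrow> ('a \<Rightarrow> 'u \<Rightarrow> real) \<Rightarrow> ('a \<Rightarrow> real) \<Rightarrow> bool" where
  "general_uniform_convergence f g V \<longleftrightarrow>
     (\<forall>\<epsilon>>0. \<exists>S>0. \<exists>\<eta>>0. \<forall>\<theta>. evaluation \<theta> \<and> TVbar \<theta> S \<le> \<eta> \<longrightarrow>
        (\<forall>y. \<bar>val f g \<theta> y - V y\<bar> \<le> \<epsilon>))"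

end

theory Submission
  imports Defs
begin

text \<open>Nothing about the control system enters: the equivalence holds for any family of
  functions indexed by evaluations. For the other, if general
  uniform convergence failed for some \<open>\<epsilon>\<close>, then choosing for every \<open>k\<close> a bad evaluation
  with \<open>TVbar \<theta>\<^sub>k (k + 1) \<le> 1 / (k + 1)\<close> yields a sequence satisfying the long-term
  condition (because \<open>TVbar \<theta> S\<close> is monotone in \<open>S\<close>) along which the values do not
  converge uniformly.\<close>

lemma evaluation_measure_le_1: "evaluation \<theta> \<Longrightarrow> measure \<theta> X \<le> 1"
  unfolding evaluation_def
  by (cases "X \<in> sets \<theta>") (auto simp: prob_space.prob_le_1 measure_notin_sets)

lemma evaluation_TV_bounds:
  assumes "evaluation \<theta>"
  shows "0 \<le> TV \<theta> s" and "TV \<theta> s \<le> 1"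
proof -
  let ?A = "{\<bar>measure \<theta> Q - measure \<theta> ((\<lambda>x. x + s) ` Q)\<bar> | Q. Q \<in> sets borel \<and> Q \<subseteq> {0..}}"
  have empty_in: "0 \<in> ?A" by (rule CollectI, rule exI[of _ "{}"]) auto
  have le_1: "x \<le> 1" if "x \<in> ?A" for x
  proof -
    from that obtain Q where "x = \<bar>measure \<theta> Q - measure \<theta> ((\<lambda>x. x + s) ` Q)\<bar>" by blast
    moreover have "measure \<theta> Q \<le> 1" "measure \<theta> ((\<lambda>x. x + s) ` Q) \<le> 1"
      using evaluation_measure_le_1[OF assms] by auto
    moreover have "measure \<theta> Q \<ge> 0" "measure \<theta> ((\<lambda>x. x + s) ` Q) \<ge> 0" by auto
    ultimately show "x \<le> 1" by linarith
  qed
  have "bdd_above ?A" using le_1 by (auto simp: bdd_above_def)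
  from cSup_upper[OF empty_in this] show "0 \<le> TV \<theta> s" unfolding TV_def .
  show "TV \<theta> s \<le> 1" unfolding TV_def using empty_in le_1 by (intro cSup_least) auto
qed

lemma bdd_above_TV_image: "evaluation \<theta> \<Longrightarrow> bdd_above {TV \<theta> s |s. 0 \<le> s \<and> s \<le> S}"
  using evaluation_TV_bounds(2) by (auto simp: bdd_above_def)

lemma TVbar_mono:
  assumes "evaluation \<theta>" "0 \<le> S" "S \<le> S'"
  shows "TVbar \<theta> S \<le> TVbar \<theta> S'"
  unfolding TVbar_def
  using assms bdd_above_TV_image[OF assms(1)] by (intro cSup_subset_mono) auto

lemma TVbar_nonneg:
  assumes "evaluation \<theta>" "0 \<le> S"
  shows "0 \<le> TVbar \<theta> S"
proof -
  have "TV \<theta> 0 \<in> {TV \<theta> s |s. 0 \<le> s \<and> s \<le> S}" using assms(2) by auto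
  from cSup_upper[OF this bdd_above_TV_image[OF assms(1)]] evaluation_TV_bounds(1)[OF assms(1), of 0]
  show ?thesis unfolding TVbar_def by linarith
qed

lemma uniform_limit_if_uniform_modulus:
  fixes W :: "'b \<Rightarrow> 'a \<Rightarrow> real" and T :: "'b \<Rightarrow> real \<Rightarrow> real"
  assumes modulus: "\<forall>\<epsilon>>0. \<exists>S>0. \<exists>\<eta>>0. \<forall>x. P x \<and> T x S \<le> \<eta> \<longrightarrow> (\<forall>y. \<bar>W x y - V y\<bar> \<le> \<epsilon>)"
    and admissible: "\<forall>k. P (X k)"
    and shifts_vanish: "\<forall>S>0. (\<lambda>k. T (X k) S) \<longlonglongrightarrow> 0"
  shows "uniform_limit UNIV (\<lambda>k. W (X k)) V sequentially"
  unfolding uniform_limit_iff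
proof (intro allI impI)
  fix \<epsilon> :: real assume "\<epsilon> > 0"
  then have "\<epsilon> / 2 > 0" by simp
  with modulus obtain S \<eta> where "S > 0" "\<eta> > 0"
    and close: "\<forall>x. P x \<and> T x S \<le> \<eta> \<longrightarrow> (\<forall>y. \<bar>W x y - V y\<bar> \<le> \<epsilon> / 2)"
    by blast
  from shifts_vanish \<open>S > 0\<close> have "(\<lambda>k. T (X k) S) \<longlonglongrightarrow> 0" by blast
  from tendstoD[OF this \<open>\<eta> > 0\<close>]
  have "\<forall>\<^sub>F k in sequentially. dist (T (X k) S) 0 < \<eta>" .
  then show "\<forall>\<^sub>F k in sequentially. \<forall>y\<in>UNIV. dist (W (X k) y) (V y) < \<epsilon>"
  proof eventually_elim
    case (elim k)
    then have "T (X k) S \<le> \<eta>" by (simp add: dist_real_def)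
    with close admissible have half: "\<bar>W (X k) y - V y\<bar> \<le> \<epsilon> / 2" for y by blast
    have "\<bar>W (X k) y - V y\<bar> < \<epsilon>" for y using half[of y] \<open>\<epsilon> > 0\<close> by linarith
    then show ?case by (simp add: dist_real_def)
  qed
qed

lemma shifts_vanish_if_diagonal_bound:
  fixes T :: "'b \<Rightarrow> real \<Rightarrow> real"
  assumes mono: "\<And>k S S'. 0 \<le> S \<Longrightarrow> S \<le> S' \<Longrightarrow> T (X k) S \<le> T (X k) S'"
    and nonneg: "\<And>k S. 0 \<le> S \<Longrightarrow> 0 \<le> T (X k) S"
    and diagonal: "\<And>k. T (X k) (real k + 1) \<le> 1 / (real k + 1)"
  shows "\<forall>S>0. (\<lambda>k. T (X k) S) \<longlonglongrightarrow> 0"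
proof (intro allI impI)
  fix S :: real assume "S > 0"
  obtain n :: nat where "S \<le> real n" using real_arch_simple by blast
  have "\<forall>\<^sub>F k in sequentially. norm (T (X k) S) \<le> 1 / (real k + 1)"
    using eventually_ge_at_top[of n]
  proof eventually_elim
    case (elim k)
    with \<open>S \<le> real n\<close> have "S \<le> real k + 1" by linarith
    then have "T (X k) S \<le> 1 / (real k + 1)"
      using mono[of S "real k + 1" k] diagonal[of k] \<open>S > 0\<close> by linarith
    then show ?case using nonneg[of S k] \<open>S > 0\<close> by simp
  qed
  moreover have "(\<lambda>k. 1 / (real k + 1)) \<longlonglongrightarrow> 0"
    using LIMSEQ_inverse_real_of_nat by (simp add: inverse_eq_divide add.commute)
  ultimately show "(\<lambda>k. T (X k) S) \<longlonglongrightarrow> 0" by (rule Lim_null_comparison)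
qed

lemma uniform_modulus_if_uniform_limits:
  fixes W :: "'b \<Rightarrow> 'a \<Rightarrow> real" and T :: "'b \<Rightarrow> real \<Rightarrow> real"
  assumes mono: "\<And>x S S'. P x \<Longrightarrow> 0 \<le> S \<Longrightarrow> S \<le> S' \<Longrightarrow> T x S \<le> T x S'"
    and nonneg: "\<And>x S. P x \<Longrightarrow> 0 \<le> S \<Longrightarrow> 0 \<le> T x S"
    and limits: "\<And>X. \<forall>k. P (X k) \<Longrightarrow> \<forall>S>0. (\<lambda>k. T (X k) S) \<longlonglongrightarrow> 0 \<Longrightarrow>
                   uniform_limit UNIV (\<lambda>k. W (X k)) V sequentially"
  shows "\<forall>\<epsilon>>0. \<exists>S>0. \<exists>\<eta>>0. \<forall>x. P x \<and> T x S \<le> \<eta> \<longrightarrow> (\<forall>y. \<bar>W x y - V y\<bar> \<le> \<epsilon>)"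
proof (rule ccontr)
  assume "\<not> ?thesis"
  then obtain \<epsilon> :: real where "\<epsilon> > 0" and bad:
    "\<And>S \<eta>. S > 0 \<Longrightarrow> \<eta> > 0 \<Longrightarrow> \<exists>x. P x \<and> T x S \<le> \<eta> \<and> (\<exists>y. \<bar>W x y - V y\<bar> > \<epsilon>)"
    by (auto simp: not_le)
  have "\<forall>k::nat. \<exists>x. P x \<and> T x (real k + 1) \<le> 1 / (real k + 1) \<and> (\<exists>y. \<bar>W x y - V y\<bar> > \<epsilon>)"
    using bad by simp
  then obtain X where admissible: "\<And>k. P (X k)"
    and diagonal: "\<And>k. T (X k) (real k + 1) \<le> 1 / (real k + 1)"
    and far: "\<And>k. \<exists>y. \<bar>W (X k) y - V y\<bar> > \<epsilon>"
    by metis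
  have "\<forall>S>0. (\<lambda>k. T (X k) S) \<longlonglongrightarrow> 0"
    using admissible by (intro shifts_vanish_if_diagonal_bound mono nonneg diagonal)
  with admissible limits have "uniform_limit UNIV (\<lambda>k. W (X k)) V sequentially" by blast
  then have "\<forall>\<^sub>F k in sequentially. \<forall>y\<in>UNIV. dist (W (X k) y) (V y) < \<epsilon>"
    using \<open>\<epsilon> > 0\<close> unfolding uniform_limit_iff by blast
  then obtain k where "\<forall>y. dist (W (X k) y) (V y) < \<epsilon>"
    by (auto simp: eventually_sequentially)
  moreover obtain y where "\<bar>W (X k) y - V y\<bar> > \<epsilon>" using far by blast
  ultimately show False by (metis dist_real_def less_asym)
qed

theorem mainTheorem6:
  fixes f :: "'a::euclidean_space \<Rightarrow> 'u::metric_space \<Rightarrow> 'a"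
    and g :: "'a \<Rightarrow> 'u \<Rightarrow> real"
    and V :: "'a \<Rightarrow> real"
    and L a :: real
  assumes g_meas: "(\<lambda>(y, u). g y u) \<in> borel_measurable borel"
    and g_bdd: "\<exists>M. \<forall>y u. \<bar>g y u\<bar> \<le> M"
    and f_meas: "(\<lambda>(y, u). f y u) \<in> borel_measurable borel"
    and L_nonneg: "L \<ge> 0" and a_pos: "a > 0"
    and f_lip: "\<forall>y y' u. norm (f y u - f y' u) \<le> L * norm (y - y')"
    and f_growth: "\<forall>y u. norm (f y u) \<le> a * (1 + norm y)"
  shows "general_limit_value f g V \<longleftrightarrow> general_uniform_convergence f g V"
proof
  assume "general_limit_value f g V"
  then have "\<forall>\<epsilon>>0. \<exists>S>0. \<exists>\<eta>>0. \<forall>\<theta>. evaluation \<theta> \<and> TVbar \<theta> S \<le> \<eta> \<longrightarrow>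
      (\<forall>y. \<bar>val f g \<theta> y - V y\<bar> \<le> \<epsilon>)"
    unfolding general_limit_value_def LTC_def
    by (intro uniform_modulus_if_uniform_limits[where P = evaluation and T = TVbar])
      (simp_all add: TVbar_mono TVbar_nonneg)
  then show "general_uniform_convergence f g V"
    unfolding general_uniform_convergence_def .
next
  assume modulus: "general_uniform_convergence f g V"
  show "general_limit_value f g V"
    unfolding general_limit_value_def
  proof (intro allI impI)
    fix \<Theta> assume "(\<forall>k. evaluation (\<Theta> k)) \<and> LTC \<Theta>"
    with modulus show "uniform_limit UNIV (\<lambda>k. val f g (\<Theta> k)) V sequentially"
      unfolding general_uniform_convergence_def LTC_def
      by (intro uniform_limit_if_uniform_modulus[where P = evaluation and T = TVbar]) simp_all
  qed
qed

end
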